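(* For every message $M$ and formula $\phi$: $\vdash\mathsf{k}_{\mathsf{CM}}(M)\to\phi$ if and only if $\vdash[M]\phi$.
   Context: Fix a finite set $\mathcal{A}$ of agent names containing a distinguished name $\mathsf{CM}$. Messages: $M ::= a \mid B \mid (M,M)$ ($a\in\mathcal{A}$, $B$ optional data constants, pairs). $\mathcal{P}$ is a denumerable set of propositional variables containing atoms $\mathsf{k}_a(M)$ ("$a$ knows $M$"). Formulas: $\phi ::= P \mid \phi\wedge\phi \mid \phi\vee\phi \mid \neg\phi \mid \phi\to\phi \mid [M]\phi$. Abbreviations: $\mathrm{true}:=\mathsf{k}_{\mathsf{CM}}(\mathsf{CM})$, $\mathrm{false}:=\neg\mathrm{true}$, $\phi\leftrightarrow\psi:=(\phi\to\psi)\wedge(\psi\to\phi)$, $\langle M\rangle\phi:=\neg\neg(\mathsf{k}_{\mathsf{CM}}(M)\wedge\phi)$. LIiP is the smallest set of formulas containing all instances of: the axioms of an adequate Hilbert axiomatization of intuitionistic propositional logic; $\mathsf{k}_a(a)$; $(\mathsf{k}_a(M)\wedge\mathsf{k}_a(M'))\leftrightarrow\mathsf{k}_a((M,M'))$; $[M]\mathsf{k}_{\mathsf{CM}}(M)$; $[M](\phi\to\psi)\to([M]\phi\to[M]\psi)$; $[M]\phi\to(\mathsf{k}_{\mathsf{CM}}(M)\to\phi)$; $[M]\phi\to\langle M\rangle\phi$; $\phi\to[M]\phi$; and closed under modus ponens and the rule: if $\mathsf{k}_{\mathsf{CM}}(M)\to\mathsf{k}_{\mathsf{CM}}(M')$ is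 in the set then so is $[M']\phi\to[M]\phi$ for every $\phi$. Write $\vdash\phi$ for $\phi\in\mathrm{LIiP}$. *)

theory Defs
  imports Main
begin

datatype ('a, 'd) msg = Ag 'a | Dat 'd | MPair "('a, 'd) msg" "('a, 'd) msg"

text \<open>Propositional variables: the knowledge atoms k_a(M) plus denumerably many others.\<close>
datatype ('a, 'd) pvar = Know 'a "('a, 'd) msg" | PV nat

datatype ('a, 'd) fm =
    Atom "('a, 'd) pvar"
  | Conj "('a, 'd) fm" "('a, 'd) fm"
  | Disj "('a, 'd) fm" "('a, 'd) fm"
  | Neg "('a, 'd) fm"
  | Imp "('a, 'd) fm" "('a, 'd) fm"
  | Box "('a, 'd) msg" "('a, 'd) fm"

definition kn :: "'a \<Rightarrow> ('a, 'd) msg \<Rightarrow> ('a, 'd) fm" where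
  "kn a M = Atom (Know a M)"

definition TT :: "'a \<Rightarrow> ('a, 'd) fm" where
  "TT CM = kn CM (Ag CM)"

definition FF :: "'a \<Rightarrow> ('a, 'd) fm" where
  "FF CM = Neg (TT CM)"

definition Iff :: "('a, 'd) fm \<Rightarrow> ('a, 'd) fm \<Rightarrow> ('a, 'd) fm" where
  "Iff p q = Conj (Imp p q) (Imp q p)"

definition Dia :: "'a \<Rightarrow> ('a, 'd) msg \<Rightarrow> ('a, 'd) fm \<Rightarrow> ('a, 'd) fm" where
  "Dia CM M p = Neg (Neg (Conj (kn CM M) p))"

text \<open>LIiP, relative to the distinguished agent name CM. Intuitionistic propositional
  logic is axiomatized by Kleene's Hilbert system (with primitive negation).\<close>
inductive LIiP :: "'a \<Rightarrow> ('a, 'd) fm \<Rightarrow> bool" for CM :: 'a where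
  I1: "LIiP CM (Imp p (Imp q p))"
| I2: "LIiP CM (Imp (Imp p q) (Imp (Imp p (Imp q r)) (Imp p r)))"
| I3: "LIiP CM (Imp p (Imp q (Conj p q)))"
| I4: "LIiP CM (Imp (Conj p q) p)"
| I5: "LIiP CM (Imp (Conj p q) q)"
| I6: "LIiP CM (Imp p (Disj p q))"
| I7: "LIiP CM (Imp q (Disj p q))"
| I8: "LIiP CM (Imp (Imp p r) (Imp (Imp q r) (Imp (Disj p q) r)))"
| I9: "LIiP CM (Imp (Imp p q) (Imp (Imp p (Neg q)) (Neg p)))"
| I10: "LIiP CM (Imp (Neg p) (Imp p q))"
| Refl: "LIiP CM (kn a (Ag a))"
| PairAx: "LIiP CM (Iff (Conj (kn a M) (kn a M')) (kn a (MPair M M')))"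
| BoxK: "LIiP CM (Box M (kn CM M))"
| Kax: "LIiP CM (Imp (Box M (Imp p q)) (Imp (Box M p) (Box M q)))"
| BoxE: "LIiP CM (Imp (Box M p) (Imp (kn CM M) p))"
| BoxDia: "LIiP CM (Imp (Box M p) (Dia CM M p))"
| BoxI: "LIiP CM (Imp p (Box M p))"
| MP: "LIiP CM (Imp p q) \<Longrightarrow> LIiP CM p \<Longrightarrow> LIiP CM q"
| Mono: "LIiP CM (Imp (kn CM M) (kn CM M')) \<Longrightarrow> LIiP CM (Imp (Box M' p) (Box M p))"

end

theory Submission
  imports Defs
begin

text \<open>Necessitation is derivable from the axiom \<open>\<phi> \<rightarrow> [M]\<phi>\<close>, so \<open>\<turnstile> k\<^sub>C\<^sub>M(M) \<rightarrow> \<phi>\<close>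
  gives \<open>\<turnstile> [M](k\<^sub>C\<^sub>M(M) \<rightarrow> \<phi>)\<close>, and K with \<open>[M]k\<^sub>C\<^sub>M(M)\<close> yields \<open>\<turnstile> [M]\<phi>\<close>.
  Conversely \<open>[M]\<phi> \<rightarrow> (k\<^sub>C\<^sub>M(M) \<rightarrow> \<phi>)\<close> is an axiom.\<close>

lemma LIiP_Box_necessitation: "LIiP CM p \<Longrightarrow> LIiP CM (Box M p)"
  by (rule LIiP.MP[OF LIiP.BoxI])

lemma LIiP_Box_mp:
  assumes "LIiP CM (Box M (Imp p q))" and "LIiP CM (Box M p)"
  shows "LIiP CM (Box M q)"
  using LIiP.MP[OF LIiP.MP[OF LIiP.Kax assms(1)] assms(2)] .

lemma LIiP_Box_imp_kn: "LIiP CM (Box M p) \<Longrightarrow> LIiP CM (Imp (kn CM M) p)"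
  by (rule LIiP.MP[OF LIiP.BoxE])

theorem theorem2p27:
  fixes CM :: "'a::finite" and M :: "('a, 'd) msg" and \<phi> :: "('a, 'd) fm"
  shows "LIiP CM (Imp (kn CM M) \<phi>) \<longleftrightarrow> LIiP CM (Box M \<phi>)"
proof
  assume "LIiP CM (Imp (kn CM M) \<phi>)"
  then have "LIiP CM (Box M (Imp (kn CM M) \<phi>))"
    by (rule LIiP_Box_necessitation)
  then show "LIiP CM (Box M \<phi>)"
    using LIiP.BoxK by (rule LIiP_Box_mp)
next
  assume "LIiP CM (Box M \<phi>)"
  then show "LIiP CM (Imp (kn CM M) \<phi>)"
    by (rule LIiP_Box_imp_kn)
qed

end
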